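(* Let $$L(x,y)=D^2-\frac{2(y+1)}{xy+x+y}D+\frac{2(y+1)^2}{(xy+x+y)^2},\qquad D=\frac{d}{dx},$$ whose solution space in $x$ for fixed $y$ is spanned by $z_1=y+(y+1)x$ and $z_2=yx+(y+1)x^2$. Then: (i) for any two distinct values $y_1\neq y_2$, the right greatest common divisor of $L(x,y_1)$ and $L(x,y_2)$ (in the ring of LODOs with coefficients depending on $x$) has order exactly $1$; (ii) for suitable (generic) three values $y_1,y_2,y_3$ the right greatest common divisor of $L(x,y_1),L(x,y_2),L(x,y_3)$ has order $0$. Consequently the Euler integral $L(x,y)\varphi(x)$ is operator-irreducible, but there are no values $y_1,y_2$ and LODOs $P_1(x),P_2(x)$ with coefficients depending on $x$ only such that $P_1(x)L(x,y_1)+P_2(x)L(x,y_2)=1$.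
   Context: A LODO in $x$ is an operator $\sum_i a_i D^i$, $D=d/dx$; operators $R(x)$ have coefficients depending only on $x$. The right greatest common divisor of LODOs $A_1,\dots,A_r$ is a LODO $G$ of maximal order such that each $A_i=B_iG$ for some LODO $B_i$ (defined up to left multiplication by a nonzero function). A Euler integral $L(x,y)\varphi(x)$ ($\varphi$ an arbitrary smooth function of $x$) is operator-reducible if $L(x,y)=M(x,y)R(x)$ with $\operatorname{ord}M<\operatorname{ord}L$ and $R(x)$ having coefficients depending on $x$ only; otherwise operator-irreducible. *)

theory Defs
  imports "HOL-Computational_Algebra.Computational_Algebra"
          "HOL-Computational_Algebra.Normalized_Fraction"
          "HOL-Computational_Algebra.Field_as_Ring"
begin

text \<open>Coefficient field: real rational functions in x, i.e. the fraction field
  of real polynomials in x, with the derivation d/dx.\<close>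

type_synonym ratfun = "real poly fract"

definition rderiv :: "ratfun \<Rightarrow> ratfun" where
  "rderiv r = (case quot_of_fract r of (p, q) \<Rightarrow>
      Fract (pderiv p * q - p * pderiv q) (q * q))"

text \<open>A LODO  sum_i a_i D^i  with coefficients a_i in ratfun is represented
  by the polynomial (in the formal variable D) with coefficients a_i.
  Multiplication is the (noncommutative) composition, using D a = a D + a'.\<close>

type_synonym lodo = "ratfun poly"

definition lodo_ord :: "lodo \<Rightarrow> nat" where
  "lodo_ord A = degree A"

text \<open>Left multiplication by D:  D (sum b_j D^j) = sum (b_j D^(j+1) + b_j' D^j).\<close>
definition Dmul :: "lodo \<Rightarrow> lodo" where
  "Dmul B = pCons 0 B + map_poly rderiv B"

definition lodo_mult :: "lodo \<Rightarrow> lodo \<Rightarrow> lodo" where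
  "lodo_mult A B = (\<Sum>i\<le>degree A. smult (coeff A i) ((Dmul ^^ i) B))"

definition common_right_divisor :: "lodo \<Rightarrow> lodo list \<Rightarrow> bool" where
  "common_right_divisor G As \<longleftrightarrow> G \<noteq> 0 \<and> (\<forall>A\<in>set As. \<exists>B. A = lodo_mult B G)"

definition is_rgcd :: "lodo \<Rightarrow> lodo list \<Rightarrow> bool" where
  "is_rgcd G As \<longleftrightarrow> common_right_divisor G As \<and>
     (\<forall>H. common_right_divisor H As \<longrightarrow> lodo_ord H \<le> lodo_ord G)"

text \<open>The operator L(x,y) = D^2 - 2(y+1)/(xy+x+y) D + 2(y+1)^2/(xy+x+y)^2.
  Note xy+x+y = y + (y+1) x is never the zero polynomial.\<close>
definition Lden :: "real \<Rightarrow> real poly" where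
  "Lden y = [:y, y + 1:]"

definition Lop :: "real \<Rightarrow> lodo" where
  "Lop y = [: Fract [:2 * (y + 1)^2:] (Lden y * Lden y),
              Fract [:- 2 * (y + 1):] (Lden y),
              1 :]"

end

theory Submission
  imports Defs
begin

(* The operator L_y = D^2 - 2 q_y D + 2 q_y^2, with q_y = (y+1)/(y+(y+1)x), is studied
   through Riccati equations.  A monic second-order operator D^2 + a1 D + a0 has the
   first-order right factor D - r exactly when  a0 + a1 r + r^2 + r' = 0.  Such an r is
   obtained as the logarithmic derivative z'/z of any nonzero solution z, and conversely
   every first-order right divisor v D + u yields the solution r = -u/v.

   It then proves the
   Riccati correspondence for arbitrary monic second-order operators, and finally
   specialises to L_y:
   (i)   for y1 <> y2 the polynomial z = (y1+(y1+1)x)(y2+(y2+1)x) solves both L_y1 and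
         L_y2, giving the common factor D - z'/z; distinct monic operators of order 2
         share no divisor of order 2, so this factor is a right gcd;
   (ii)  L_{-1} = D^2 forces r' + r^2 = 0 on a common first-order factor D - r, and then
         L_y forces r = q_y, which is impossible for two further distinct values of y;
   (iii) hence a right factor R(x) common to all L_y has order 0, so L is irreducible;
   (iv)  the common solution z is killed by P1 L_y1 + P2 L_y2, which thus cannot be 1. *)

(* rderiv is the quotient rule on any representation p/q, not only the normalised one. *)
lemma rderiv_quot:
  assumes q: "q \<noteq> 0"
  shows "rderiv (to_fract p / to_fract q) = to_fract (pderiv p * q - p * pderiv q) / to_fract (q * q)"
proof -
  obtain p0 q0 where pq: "quot_of_fract (to_fract p / to_fract q) = (p0, q0)"
    by (cases "quot_of_fract (to_fract p / to_fract q)") auto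
  have q0: "q0 \<noteq> 0" using snd_quot_of_fract_nonzero[of "to_fract p / to_fract q"] pq by simp
  have "Fract p0 q0 = to_fract p / to_fract q"
    using Fract_quot_of_fract[of "to_fract p / to_fract q"] pq by simp
  hence "to_fract (p0 * q) = to_fract (p * q0)"
    using q q0 by (simp add: Fract_conv_to_fract field_simps)
  hence cross: "p0 * q = p * q0" by (rule to_fract_eq_iff[THEN iffD1])
  hence cross': "pderiv p0 * q + p0 * pderiv q = pderiv p * q0 + p * pderiv q0"
    by (metis pderiv_mult mult.commute)
  have "rderiv (to_fract p / to_fract q) = Fract (pderiv p0 * q0 - p0 * pderiv q0) (q0 * q0)"
    by (simp add: rderiv_def pq)
  also have "\<dots> = Fract (pderiv p * q - p * pderiv q) (q * q)"
    using q q0 cross cross' by (subst eq_fract(1)) (auto, algebra)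
  finally show ?thesis by (simp add: Fract_conv_to_fract)
qed

lemma rderiv_to_fract [simp]: "rderiv (to_fract p) = to_fract (pderiv p)"
  using rderiv_quot[of 1 p] by simp

lemma rderiv_0 [simp]: "rderiv 0 = 0"
  using rderiv_to_fract[of 0] by simp

lemma rderiv_1 [simp]: "rderiv 1 = 0"
  using rderiv_to_fract[of 1] by simp

lemma ratfun_as_quotient:
  obtains p q where "q \<noteq> 0" "(a :: ratfun) = to_fract p / to_fract q"
proof -
  obtain p q where "q \<noteq> 0" "a = Fract p q" by (cases a) auto
  thus ?thesis using that by (simp add: Fract_conv_to_fract)
qed

lemma rderiv_add [simp]: "rderiv (a + b) = rderiv a + rderiv b"
proof -
  obtain p q where q: "q \<noteq> 0" and a: "a = to_fract p / to_fract q" by (rule ratfun_as_quotient)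
  obtain r s where s: "s \<noteq> 0" and b: "b = to_fract r / to_fract s" by (rule ratfun_as_quotient)
  have "a + b = to_fract (p * s + r * q) / to_fract (q * s)"
    using q s a b by (simp add: field_simps)
  hence "rderiv (a + b) = to_fract (pderiv (p * s + r * q) * (q * s) - (p * s + r * q) * pderiv (q * s))
      / to_fract (q * s * (q * s))"
    by (simp only:) (rule rderiv_quot, simp add: q s)
  also have "\<dots> = rderiv a + rderiv b"
    unfolding a b using q s by (simp add: rderiv_quot pderiv_mult pderiv_add field_simps)
  finally show ?thesis .
qed

lemma rderiv_mult [simp]: "rderiv (a * b) = rderiv a * b + a * rderiv b"
proof -
  obtain p q where q: "q \<noteq> 0" and a: "a = to_fract p / to_fract q" by (rule ratfun_as_quotient)
  obtain r s where s: "s \<noteq> 0" and b: "b = to_fract r / to_fract s" by (rule ratfun_as_quotient)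
  have "a * b = to_fract (p * r) / to_fract (q * s)"
    using q s a b by (simp add: field_simps)
  hence "rderiv (a * b) = to_fract (pderiv (p * r) * (q * s) - (p * r) * pderiv (q * s))
      / to_fract (q * s * (q * s))"
    by (simp only:) (rule rderiv_quot, simp add: q s)
  also have "\<dots> = rderiv a * b + a * rderiv b"
    unfolding a b using q s by (simp add: rderiv_quot pderiv_mult field_simps)
  finally show ?thesis .
qed

lemma rderiv_uminus [simp]: "rderiv (- a) = - rderiv a"
  using rderiv_add[of a "- a"] by (simp add: eq_neg_iff_add_eq_0 add.commute)

lemma rderiv_divide:
  assumes "b \<noteq> 0"
  shows "rderiv (a / b) = (rderiv a * b - a * rderiv b) / (b * b)"
proof -
  have "rderiv a = rderiv (a / b * b)" using assms by simp
  also have "\<dots> = rderiv (a / b) * b + a / b * rderiv b" by (rule rderiv_mult)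
  finally have "rderiv (a / b) * b = rderiv a - a / b * rderiv b" by simp
  hence "rderiv (a / b) * (b * b) = rderiv a * b - a * rderiv b"
    using assms by (simp add: field_simps)
  thus ?thesis using assms by (simp add: eq_divide_eq)
qed

lemma rderiv_sum: "rderiv (sum g S) = (\<Sum>i\<in>S. rderiv (g i))"
  by (induction S rule: infinite_finite_induct) auto

definition app :: "lodo \<Rightarrow> ratfun \<Rightarrow> ratfun" where
  "app A f = (\<Sum>i\<le>degree A. coeff A i * (rderiv ^^ i) f)"

lemma app_bound: "degree A \<le> m \<Longrightarrow> app A f = (\<Sum>i\<le>m. coeff A i * (rderiv ^^ i) f)"
  unfolding app_def by (rule sum.mono_neutral_left) (auto simp: coeff_eq_0)

lemma app_add: "app (A + B) f = app A f + app B f"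
proof -
  let ?m = "max (degree A) (degree B)"
  have "degree (A + B) \<le> ?m" by (rule degree_add_le) auto
  thus ?thesis using app_bound[of A ?m] app_bound[of B ?m] app_bound[of "A + B" ?m]
    by (simp add: sum.distrib algebra_simps)
qed

lemma app_0 [simp]: "app 0 f = 0"
  by (simp add: app_def)

lemma app_sum: "app (sum g S) f = (\<Sum>i\<in>S. app (g i) f)"
  by (induction S rule: infinite_finite_induct) (auto simp: app_add)

lemma app_smult: "app (smult c A) f = c * app A f"
  using app_bound[of "smult c A" "degree A"] by (simp add: app_def sum_distrib_left mult.assoc)

lemma app_pCons0: "app (pCons 0 B) f = app B (rderiv f)"
proof -
  have "app (pCons 0 B) f = (\<Sum>i\<le>Suc (degree B). coeff (pCons 0 B) i * (rderiv ^^ i) f)"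
    by (rule app_bound) (simp add: degree_pCons_le)
  also have "\<dots> = (\<Sum>i\<le>degree B. coeff B i * (rderiv ^^ i) (rderiv f))"
    by (subst sum.atMost_Suc_shift) (simp add: funpow_swap1)
  finally show ?thesis by (simp add: app_def)
qed

lemma app_Dmul: "app (Dmul B) f = rderiv (app B f)"
proof -
  have "app (map_poly rderiv B) f = (\<Sum>i\<le>degree B. rderiv (coeff B i) * (rderiv ^^ i) f)"
    by (subst app_bound[of _ "degree B"]) (auto simp: map_poly_degree_leq coeff_map_poly)
  thus ?thesis
    unfolding Dmul_def app_add app_pCons0
    by (simp add: app_def rderiv_sum sum.distrib funpow_swap1)
qed

lemma app_lodo_mult: "app (lodo_mult A B) f = app A (app B f)"
proof -
  have "app ((Dmul ^^ i) B) f = (rderiv ^^ i) (app B f)" for i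
    by (induction i) (auto simp: app_Dmul)
  thus ?thesis unfolding lodo_mult_def app_sum app_smult by (simp add: app_def)
qed

lemma app_to_0 [simp]: "app A 0 = 0"
proof -
  have "(rderiv ^^ i) 0 = 0" for i by (induction i) auto
  thus ?thesis by (simp add: app_def)
qed

lemma app_one [simp]: "app 1 f = f"
  by (simp add: app_def)

lemma app_monic2: "app [:a0, a1, 1:] f = a0 * f + a1 * rderiv f + rderiv (rderiv f)"
  by (subst app_bound[of _ 2]) (auto simp: numeral_2_eq_2)

lemma Dmul_degree:
  assumes "H \<noteq> 0"
  shows "degree (Dmul H) = Suc (degree H) \<and> coeff (Dmul H) (Suc (degree H)) = lead_coeff H"
proof -
  have c: "coeff (Dmul H) (Suc (degree H)) = lead_coeff H"
    by (simp add: Dmul_def coeff_map_poly coeff_eq_0)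
  have "degree (Dmul H) \<le> Suc (degree H)" unfolding Dmul_def
    by (rule degree_add_le) (auto intro: le_SucI simp: degree_pCons_le map_poly_degree_leq)
  moreover have "Suc (degree H) \<le> degree (Dmul H)"
    by (rule le_degree) (simp add: c assms)
  ultimately show ?thesis using c by simp
qed

lemma Dmul_pow_degree:
  assumes "H \<noteq> 0"
  shows "degree ((Dmul ^^ i) H) = degree H + i \<and>
    coeff ((Dmul ^^ i) H) (degree H + i) = lead_coeff H"
proof (induction i)
  case (Suc i)
  have "(Dmul ^^ i) H \<noteq> 0" using Suc assms by (metis leading_coeff_0_iff)
  from Dmul_degree[OF this] show ?case using Suc by simp
qed simp

(* Orders add under multiplication of nonzero operators (leading coefficients multiply). *)
lemma lodo_mult_degree:
  assumes B: "B \<noteq> 0" and H: "H \<noteq> 0"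
  shows "degree (lodo_mult B H) = degree B + degree H"
proof -
  let ?n = "degree B + degree H"
  have "degree (smult (coeff B i) ((Dmul ^^ i) H)) \<le> ?n" if "i \<le> degree B" for i
    using that Dmul_pow_degree[OF H, of i] degree_smult_le[of "coeff B i" "(Dmul ^^ i) H"] by simp
  hence le: "degree (lodo_mult B H) \<le> ?n"
    unfolding lodo_mult_def by (intro degree_sum_le) auto
  have "coeff ((Dmul ^^ i) H) ?n = 0" if "i < degree B" for i
    using that Dmul_pow_degree[OF H, of i] by (simp add: coeff_eq_0)
  hence "(\<Sum>i<degree B. coeff B i * coeff ((Dmul ^^ i) H) ?n) = 0"
    by (intro sum.neutral) simp
  hence "coeff (lodo_mult B H) ?n = lead_coeff B * coeff ((Dmul ^^ degree B) H) ?n"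
    unfolding lodo_mult_def coeff_sum by (simp add: lessThan_Suc_atMost[symmetric])
  also have "\<dots> = lead_coeff B * lead_coeff H"
    using Dmul_pow_degree[OF H, of "degree B"] by (simp add: add.commute)
  finally have "coeff (lodo_mult B H) ?n \<noteq> 0" using B H by simp
  hence "?n \<le> degree (lodo_mult B H)" by (rule le_degree)
  with le show ?thesis by simp
qed

lemma lodo_mult_0_left [simp]: "lodo_mult 0 H = 0"
  by (simp add: lodo_mult_def)

lemma lodo_mult_0_right [simp]: "lodo_mult B 0 = 0"
proof -
  have "(Dmul ^^ i) 0 = 0" for i by (induction i) (simp_all add: Dmul_def)
  thus ?thesis by (simp add: lodo_mult_def)
qed

lemma lodo_mult_order0: "degree B = 0 \<Longrightarrow> lodo_mult B H = smult (coeff B 0) H"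
  by (simp add: lodo_mult_def)

lemma lodo_mult_order1:
  "degree B = 1 \<Longrightarrow> lodo_mult B H = smult (coeff B 0) H + smult (coeff B 1) (Dmul H)"
  by (simp add: lodo_mult_def)

lemma lodo_mult_1_right: "lodo_mult A 1 = A"
proof -
  have "(Dmul ^^ i) 1 = monom 1 i" for i
    by (induction i) (simp_all add: monom_0 one_pCons Dmul_def map_poly_monom monom_Suc)
  thus ?thesis unfolding lodo_mult_def by (simp add: smult_monom poly_as_sum_of_monoms)
qed

definition riccati :: "ratfun \<Rightarrow> ratfun \<Rightarrow> ratfun \<Rightarrow> bool" where
  "riccati a0 a1 r \<longleftrightarrow> a0 + a1 * r + r\<^sup>2 + rderiv r = 0"

lemma riccati_right_factor:
  assumes "riccati a0 a1 r"
  shows "[:a0, a1, 1:] = lodo_mult [:a1 + r, 1:] [:- r, 1:]"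
proof -
  have "a0 = - rderiv r - (a1 + r) * r"
    using assms unfolding riccati_def by (simp add: algebra_simps power2_eq_square eq_neg_iff_add_eq_0)
  thus ?thesis by (simp add: lodo_mult_order1 Dmul_def map_poly_pCons algebra_simps)
qed

lemma riccati_of_solution:
  assumes sol: "app [:a0, a1, 1:] z = 0" and z: "z \<noteq> 0"
  shows "riccati a0 a1 (rderiv z / z)"
proof -
  have d: "rderiv (rderiv z / z) = (rderiv (rderiv z) * z - rderiv z * rderiv z) / (z * z)"
    using z by (simp add: rderiv_divide)
  have "a0 + a1 * (rderiv z / z) + (rderiv z / z)\<^sup>2 + rderiv (rderiv z / z)
      = app [:a0, a1, 1:] z / z"
    unfolding d app_monic2 using z by (simp add: field_simps power2_eq_square)
  thus ?thesis using sol by (simp add: riccati_def)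
qed

lemma riccati_of_right_factor:
  assumes fac: "[:a0, a1, 1:] = lodo_mult B H" and dH: "degree H = 1"
  shows "riccati a0 a1 (- coeff H 0 / coeff H 1)"
proof -
  define u v b0 b1 where "u = coeff H 0" and "v = coeff H 1"
    and "b0 = coeff B 0" and "b1 = coeff B 1"
  have v: "v \<noteq> 0" using dH unfolding v_def by (metis leading_coeff_0_iff one_neq_zero degree_0)
  have "B \<noteq> 0" "H \<noteq> 0" using fac dH by auto
  from lodo_mult_degree[OF this] have "degree B = 1"
    using dH by (simp flip: fac)
  hence fac': "[:a0, a1, 1:] = smult b0 H + smult b1 (Dmul H)"
    using fac by (simp add: lodo_mult_order1 b0_def b1_def)
  have "coeff H 2 = 0" using dH by (simp add: coeff_eq_0)
  hence "1 = b1 * v"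
    using arg_cong[OF fac', of "\<lambda>p. coeff p 2"]
    by (simp add: v_def Dmul_def coeff_map_poly numeral_2_eq_2)
  hence c2: "b1 = 1 / v" using v by (simp add: field_simps)
  have c1: "a1 = b0 * v + b1 * (u + rderiv v)"
    using arg_cong[OF fac', of "\<lambda>p. coeff p 1"] by (simp add: u_def v_def Dmul_def coeff_map_poly)
  have c0: "a0 = b0 * u + b1 * rderiv u"
    using arg_cong[OF fac', of "\<lambda>p. coeff p 0"] by (simp add: u_def v_def Dmul_def coeff_map_poly)
  have "(a0 + a1 * (- u / v) + (- u / v)\<^sup>2 + rderiv (- u / v)) * (v * v) = 0"
    using v by (simp add: c0 c1 c2 rderiv_divide field_simps power2_eq_square)
  thus ?thesis using v by (simp add: riccati_def u_def v_def)
qed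

(* Distinct monic operators of order 2 have no common right divisor of order 2, since
   such a divisor would make both of them equal to the same scalar multiple of it. *)
lemma common_right_divisor_monic2_order_le1:
  assumes ne: "[:a0, a1, 1:] \<noteq> [:b0, b1, 1:]"
    and cd: "common_right_divisor H [[:a0, a1, 1:], [:b0, b1, 1:]]"
  shows "degree H \<le> 1"
proof (rule ccontr)
  assume "\<not> degree H \<le> 1"
  hence dH: "degree H \<ge> 2" by simp
  have "H \<noteq> 0" using cd by (simp add: common_right_divisor_def)
  have scalar_multiple: "A = smult (inverse (lead_coeff H)) H"
    if A: "A = [:c0, c1, 1:]" and B: "A = lodo_mult B H" for A B c0 c1
  proof -
    have "B \<noteq> 0" using A B by auto
    from lodo_mult_degree[OF this \<open>H \<noteq> 0\<close>] have "degree B + degree H = 2"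
      using A B by simp
    hence "degree B = 0" "degree H = 2" using dH by auto
    hence AB: "A = smult (coeff B 0) H" using B by (simp add: lodo_mult_order0)
    have "coeff B 0 * lead_coeff H = 1"
      using arg_cong[OF AB, of "\<lambda>p. coeff p 2"] A \<open>degree H = 2\<close> by (simp add: numeral_2_eq_2)
    hence "coeff B 0 = inverse (lead_coeff H)" by (metis inverse_unique mult.commute)
    with AB show ?thesis by simp
  qed
  obtain B1 B2 where "[:a0, a1, 1:] = lodo_mult B1 H" "[:b0, b1, 1:] = lodo_mult B2 H"
    using cd by (auto simp: common_right_divisor_def)
  hence "[:a0, a1, 1:] = [:b0, b1, 1:]" using scalar_multiple by metis
  thus False using ne by contradiction
qed

lemma common_solution_no_bezout:
  assumes "app A z = 0" "app B z = 0" "z \<noteq> 0"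
  shows "lodo_mult P A + lodo_mult Q B \<noteq> 1"
proof
  assume "lodo_mult P A + lodo_mult Q B = 1"
  hence "app 1 z = app P (app A z) + app Q (app B z)"
    by (metis app_add app_lodo_mult)
  thus False using assms by simp
qed

lemma Lden_nonzero [simp]: "Lden y \<noteq> 0"
  by (simp add: Lden_def)

definition Lq :: "real \<Rightarrow> ratfun" where
  "Lq y = to_fract [:y + 1:] / to_fract (Lden y)"

lemma Lop_Lq: "Lop y = [:2 * (Lq y)\<^sup>2, - 2 * Lq y, 1:]"
proof -
  have coeffs: "[:2 * (y + 1)^2:] = 2 * [:y + 1:] * [:y + 1:]" "[:- 2 * (y + 1):] = - (2 * [:y + 1:])"
    by (simp_all add: power2_eq_square numeral_poly)
  have two: "to_fract (2 :: real poly) = 2"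
    using to_fract_add[of 1 1] by simp
  show ?thesis
    unfolding Lop_def Lq_def Fract_conv_to_fract coeffs to_fract_mult to_fract_uminus two
    by (simp add: power2_eq_square)
qed

lemma Lq_inj:
  assumes "Lq y1 = Lq y2"
  shows "y1 = y2"
proof -
  have "to_fract [:y1 + 1:] * to_fract (Lden y2) = to_fract [:y2 + 1:] * to_fract (Lden y1)"
    using assms by (simp add: Lq_def frac_eq_eq)
  hence "[:y1 + 1:] * Lden y2 = [:y2 + 1:] * Lden y1"
    by (simp only: to_fract_mult[symmetric] to_fract_eq_iff)
  hence "y2 * (y1 + 1) = y1 * (y2 + 1)"
    using arg_cong[of _ _ "\<lambda>p. coeff p 0"] by (simp add: Lden_def)
  thus ?thesis by (simp add: algebra_simps)
qed

lemma Lq_eq_0_iff: "Lq y = 0 \<longleftrightarrow> y = -1"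
  by (simp add: Lq_def add_eq_0_iff)

lemma Lop_inj: "Lop y1 = Lop y2 \<Longrightarrow> y1 = y2"
  using Lq_inj by (simp add: Lop_Lq)

lemma Lop_common_solution: "app (Lop y) (to_fract (Lden y * Lden w)) = 0"
proof -
  have "pderiv (Lden v) = [:v + 1:]" for v
    by (simp add: Lden_def pderiv_pCons)
  thus ?thesis
    unfolding Lop_Lq app_monic2 to_fract_mult
    by (simp add: Lq_def field_simps power2_eq_square)
qed

lemma Lop_pair_order_le1:
  assumes "y1 \<noteq> y2" and "common_right_divisor H [Lop y1, Lop y2]"
  shows "degree H \<le> 1"
  using assms common_right_divisor_monic2_order_le1 Lop_inj unfolding Lop_Lq by metis

lemma Lop_pair_rgcd:
  assumes ne: "y1 \<noteq> y2"
  defines "z \<equiv> to_fract (Lden y1 * Lden y2)"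
  shows "is_rgcd [:- (rderiv z / z), 1:] [Lop y1, Lop y2]"
proof -
  have z: "z \<noteq> 0" by (simp add: z_def)
  have "app (Lop y1) z = 0" "app (Lop y2) z = 0"
    using Lop_common_solution[of y1 y2] Lop_common_solution[of y2 y1]
    by (simp_all add: z_def mult.commute)
  hence "Lop y = lodo_mult [:- 2 * Lq y + rderiv z / z, 1:] [:- (rderiv z / z), 1:]"
    if "y \<in> {y1, y2}" for y
    using that z riccati_right_factor riccati_of_solution Lop_Lq by (metis insertE singletonD)
  hence "common_right_divisor [:- (rderiv z / z), 1:] [Lop y1, Lop y2]"
    unfolding common_right_divisor_def by auto
  thus ?thesis
    using Lop_pair_order_le1[OF ne] unfolding is_rgcd_def lodo_ord_def by auto
qed

lemma riccati_Lop_determines_solution: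
  assumes "riccati (2 * (Lq y)\<^sup>2) (- 2 * Lq y) r"
    and "riccati (2 * (Lq (-1))\<^sup>2) (- 2 * Lq (-1)) r" and "y \<noteq> -1"
  shows "r = Lq y"
proof -
  have "Lq (-1) = 0" by (simp add: Lq_eq_0_iff)
  hence "r\<^sup>2 + rderiv r = 0" using assms(2) by (simp add: riccati_def)
  moreover have "2 * (Lq y)\<^sup>2 - 2 * Lq y * r + r\<^sup>2 + rderiv r = 0"
    using assms(1) by (simp add: riccati_def)
  ultimately have "2 * Lq y * (Lq y - r) = 0" by algebra
  thus ?thesis using assms(3) by (simp add: Lq_eq_0_iff)
qed

lemma Lop_triple_order0:
  assumes ne: "y1 \<noteq> y2" "y1 \<noteq> -1" "y2 \<noteq> -1"
    and cd: "common_right_divisor H [Lop (-1), Lop y1, Lop y2]"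
  shows "degree H = 0"
proof (rule ccontr)
  assume "degree H \<noteq> 0"
  moreover have "degree H \<le> 1"
    using Lop_pair_order_le1[of "-1" y1 H] ne cd by (simp add: common_right_divisor_def)
  ultimately have "degree H = 1" by simp
  hence "riccati (2 * (Lq y)\<^sup>2) (- 2 * Lq y) (- coeff H 0 / coeff H 1)"
    if "y \<in> {-1, y1, y2}" for y
    using that cd riccati_of_right_factor unfolding common_right_divisor_def Lop_Lq by fastforce
  hence "Lq y1 = Lq y2"
    using riccati_Lop_determines_solution ne by (metis insertCI)
  thus False using Lq_inj ne by blast
qed

theorem mainTheorem3:
  shows "(\<forall>y1 y2. y1 \<noteq> y2 \<longrightarrow>
            (\<exists>G. is_rgcd G [Lop y1, Lop y2] \<and> lodo_ord G = 1))
       \<and> (\<exists>y1 y2 y3. \<exists>G. is_rgcd G [Lop y1, Lop y2, Lop y3] \<and> lodo_ord G = 0)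
       \<and> \<not> (\<exists>(M :: real \<Rightarrow> lodo) (R :: lodo).
              \<forall>y. Lop y = lodo_mult (M y) R \<and> lodo_ord (M y) < lodo_ord (Lop y))
       \<and> \<not> (\<exists>y1 y2 (P1 :: lodo) (P2 :: lodo).
              lodo_mult P1 (Lop y1) + lodo_mult P2 (Lop y2) = 1)"
proof (intro conjI allI impI notI)
  fix y1 y2 :: real
  assume "y1 \<noteq> y2"
  from Lop_pair_rgcd[OF this]
  show "\<exists>G. is_rgcd G [Lop y1, Lop y2] \<and> lodo_ord G = 1" by (auto simp: lodo_ord_def)
next
  have "common_right_divisor 1 [Lop (-1), Lop 0, Lop 1]"
    unfolding common_right_divisor_def using lodo_mult_1_right by auto
  hence "is_rgcd 1 [Lop (-1), Lop 0, Lop 1]"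
    unfolding is_rgcd_def lodo_ord_def using Lop_triple_order0[of 0 1] by auto
  thus "\<exists>y1 y2 y3. \<exists>G. is_rgcd G [Lop y1, Lop y2, Lop y3] \<and> lodo_ord G = 0"
    unfolding lodo_ord_def by (metis degree_1)
next
  assume "\<exists>M R. \<forall>y. Lop y = lodo_mult (M y) R \<and> lodo_ord (M y) < lodo_ord (Lop y)"
  then obtain M R where MR: "\<And>y. Lop y = lodo_mult (M y) R" "\<And>y. degree (M y) < degree (Lop y)"
    unfolding lodo_ord_def by blast
  have "M 0 \<noteq> 0" "R \<noteq> 0" using MR(1)[of 0] by (auto simp: Lop_Lq)
  moreover have "degree R = 0"
    using MR(1) \<open>R \<noteq> 0\<close> by (intro Lop_triple_order0[of 0 1]) (auto simp: common_right_divisor_def)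
  ultimately show False using lodo_mult_degree MR by (metis add_0_right less_irrefl)
next
  assume "\<exists>y1 y2 P1 P2. lodo_mult P1 (Lop y1) + lodo_mult P2 (Lop y2) = 1"
  then obtain y1 y2 P1 P2 where "lodo_mult P1 (Lop y1) + lodo_mult P2 (Lop y2) = 1" by blast
  moreover have "app (Lop y1) (to_fract (Lden y1 * Lden y2)) = 0"
    and "app (Lop y2) (to_fract (Lden y1 * Lden y2)) = 0"
    using Lop_common_solution[of y1 y2] Lop_common_solution[of y2 y1] by (simp_all add: mult.commute)
  ultimately show False using common_solution_no_bezout by force
qed

end
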